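(* Let $d\ge1$, $\lambda>0$, $\delta>0$, and let $f:\mathbb{R}^d\to\mathbb{R}$ satisfy: (A1) $f$ is continuous and has at least one minimizer; (A2) $\int_{\mathbb{R}^d}\exp(-f(y)/\delta)\,dy<+\infty$. Assume that $f^{\lambda,\delta}$ is convex and let $X^\star_{\lambda,\delta}:=\operatorname{argmin}f^{\lambda,\delta}$. Then there exists a convex function $H_{\lambda,\delta}:\mathbb{R}^d\to\mathbb{R}$ such that $\operatorname{zprox}^\delta_{\lambda,f}=\operatorname{prox}_{\lambda\delta H_{\lambda,\delta}}$; in particular $\operatorname{zprox}^\delta_{\lambda,f}$ is firmly nonexpansive. Moreover, the ZOPPA sequence $(x^k)_{k\in\mathbb{N}}$ converges to some $x^\star_{\lambda,\delta}\in X^\star_{\lambda,\delta}$, and for every $k\ge1$, \[f^{\lambda,\delta}(x^k)-\min f^{\lambda,\delta}\le\frac{\operatorname{dist}(x^0,X^\star_{\lambda,\delta})^2}{2\lambda k},\qquad \|\nabla f^{\lambda,\delta}(x^k)\|\le\frac{2\operatorname{dist}(x^0,X^\star_{\lambda,\delta})}{\lambda(k+1)}.\]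
   Context: The zeroth-order proximal operator is $\operatorname{zprox}^\delta_{\lambda,f}(x)=\dfrac{\mathbb{E}_{y\sim\mathcal N(x,\lambda\delta I)}[y\exp(-f(y)/\delta)]}{\mathbb{E}_{y\sim\mathcal N(x,\lambda\delta I)}[\exp(-f(y)/\delta)]}$; the soft Moreau envelope is $f^{\lambda,\delta}(x)=-\delta\log\mathbb{E}_{y\sim\mathcal N(x,\lambda\delta I)}[\exp(-f(y)/\delta)]$. For $g:\mathbb{R}^d\to\mathbb{R}$ and $t>0$, $\operatorname{prox}_{tg}(x)=\operatorname{argmin}_y\{t g(y)+\frac12\|y-x\|^2\}$. An operator $T$ is firmly nonexpansive if $\|Tx-Ty\|^2\le\langle Tx-Ty,x-y\rangle$ for all $x,y$. ZOPPA: given $x^0\in\mathbb{R}^d$, iterate $x^{k+1}=\operatorname{zprox}^\delta_{\lambda,f}(x^k)$. *)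

theory Defs
  imports "HOL-Analysis.Analysis"
begin

definition gauss_density :: "real \<Rightarrow> 'a::euclidean_space \<Rightarrow> 'a \<Rightarrow> real" where
  "gauss_density s x y = (2 * pi * s) powr (- real DIM('a) / 2) * exp (- (norm (y - x))\<^sup>2 / (2 * s))"

definition gauss_expect :: "real \<Rightarrow> 'a::euclidean_space \<Rightarrow> ('a \<Rightarrow> 'b::{banach,second_countable_topology}) \<Rightarrow> 'b" where
  "gauss_expect s x g = (\<integral> y. gauss_density s x y *\<^sub>R g y \<partial>lborel)"

definition zprox :: "real \<Rightarrow> real \<Rightarrow> ('a::euclidean_space \<Rightarrow> real) \<Rightarrow> 'a \<Rightarrow> 'a" where
  "zprox del lam f x =
     (1 / gauss_expect (lam * del) x (\<lambda>y. exp (- f y / del))) *\<^sub>R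
       gauss_expect (lam * del) x (\<lambda>y. exp (- f y / del) *\<^sub>R y)"

definition soft_moreau :: "real \<Rightarrow> real \<Rightarrow> ('a::euclidean_space \<Rightarrow> real) \<Rightarrow> 'a \<Rightarrow> real" where
  "soft_moreau lam del f x = - del * ln (gauss_expect (lam * del) x (\<lambda>y. exp (- f y / del)))"

definition prox :: "real \<Rightarrow> ('a::real_normed_vector \<Rightarrow> real) \<Rightarrow> 'a \<Rightarrow> 'a" where
  "prox t g x = (THE y. \<forall>z. t * g y + (norm (y - x))\<^sup>2 / 2 \<le> t * g z + (norm (z - x))\<^sup>2 / 2)"

definition firmly_nonexpansive :: "('a::real_inner \<Rightarrow> 'a) \<Rightarrow> bool" where
  "firmly_nonexpansive T \<longleftrightarrow> (\<forall>x y. (norm (T x - T y))\<^sup>2 \<le> inner (T x - T y) (x - y))"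

definition argmin_set :: "('a \<Rightarrow> real) \<Rightarrow> 'a set" where
  "argmin_set F = {x. \<forall>y. F x \<le> F y}"

definition zoppa :: "real \<Rightarrow> real \<Rightarrow> ('a::euclidean_space \<Rightarrow> real) \<Rightarrow> 'a \<Rightarrow> nat \<Rightarrow> 'a" where
  "zoppa del lam f x0 k = (zprox del lam f ^^ k) x0"

end

theory Submission
  imports Defs
begin

text \<open>
  Put \<open>s = \<lambda> \<delta>\<close> and \<open>w = exp (- f / \<delta>)\<close>, and let \<open>Z x\<close> be the expectation of \<open>w\<close> under
  \<open>N(x, s I)\<close>. The soft Moreau envelope is \<open>F = - \<delta> ln Z\<close>, and \<open>zprox x\<close> is the mean of the
  tilted measure \<open>w N(x, s I)\<close>. Moving the centre of the Gaussian from \<open>x\<close> to \<open>z\<close> multiplies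
  its density by the exponential of an affine function of \<open>y\<close>; bounding that exponential
  below by its tangent at the tilted mean gives the descent inequality
  \<open>F z \<le> F x + \<langle>g x, z - x\<rangle> + |z - x|\<^sup>2 / (2 \<lambda>)\<close> with \<open>g x = (x - zprox x) / \<lambda>\<close>.
  So, once \<open>F\<close> is convex, \<open>zprox\<close> is the gradient step \<open>x - \<lambda> g x\<close> for a convex function
  with \<open>1/\<lambda>\<close>-Lipschitz gradient \<open>g\<close>: cocoercivity makes the step firmly nonexpansive, and
  the classical analysis of gradient descent (Fejer monotonicity towards the minimisers and
  the \<open>O(1/k)\<close> bounds) applies. \<open>F\<close> is coercive because \<open>Z\<close> vanishes at infinity, so
  minimisers exist.

  Moreover \<open>\<psi> = |.|\<^sup>2 / 2 - \<lambda> F\<close> is convex with gradient \<open>zprox\<close>, and \<open>\<psi> - \<langle>., p\<rangle>\<close> is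
  coercive for every \<open>p\<close>, so \<open>zprox\<close> is onto. Hence \<open>zprox = \<nabla>\<psi>\<close> is the proximal map of
  \<open>H = \<psi>\<^sup>* - |.|\<^sup>2 / 2\<close>, which is convex because \<open>x - zprox x\<close> is a subgradient of \<open>H\<close> at
  \<open>zprox x\<close>.
\<close>

section \<open>Gradient descent on smooth convex functions\<close>

lemma firmly_nonexpansive_imp_nonexpansive:
  assumes "firmly_nonexpansive T"
  shows "norm (T x - T y) \<le> norm (x - y)"
proof -
  have "(norm (T x - T y))\<^sup>2 \<le> inner (T x - T y) (x - y)"
    using assms unfolding firmly_nonexpansive_def by blast
  also have "\<dots> \<le> norm (T x - T y) * norm (x - y)"
    by (rule norm_cauchy_schwarz)
  finally have "norm (T x - T y) * norm (T x - T y) \<le> norm (T x - T y) * norm (x - y)"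
    by (simp add: power2_eq_square)
  then show ?thesis
    by (cases "T x = T y") (simp_all add: mult_le_cancel_left_pos)
qed

lemma continuous_coercive_attains_min:
  fixes F :: "'a::{real_normed_vector,heine_borel} \<Rightarrow> real"
  assumes cont: "continuous_on UNIV F" and coercive: "filterlim F at_top at_infinity"
  shows "\<exists>m. \<forall>y. F m \<le> F y"
proof -
  have "\<forall>\<^sub>F x in at_infinity. F 0 \<le> F x"
    using coercive by (simp add: filterlim_at_top)
  then obtain R where R: "\<And>x. R \<le> norm x \<Longrightarrow> F 0 \<le> F x"
    by (auto simp: eventually_at_infinity)
  have nonempty: "cball 0 (max R 0) \<noteq> {}"
    by simp
  obtain m where m: "\<forall>y \<in> cball 0 (max R 0). F m \<le> F y"
    using continuous_attains_inf[OF compact_cball nonempty continuous_on_subset[OF cont subset_UNIV]] by blast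
  have "F m \<le> F y" for y
  proof (cases "norm y \<le> max R 0")
    case True
    then show ?thesis
      using m by simp
  next
    case False
    then have "F 0 \<le> F y"
      by (intro R) simp
    moreover have "F m \<le> F 0"
      using m by simp
    ultimately show ?thesis
      by linarith
  qed
  then show ?thesis
    by blast
qed

lemma decreasing_dist_subseq_imp_LIMSEQ:
  fixes X :: "nat \<Rightarrow> 'a::metric_space"
  assumes dec: "\<And>k. dist (X (Suc k)) l \<le> dist (X k) l"
    and r: "strict_mono r" and sub: "(X \<circ> r) \<longlonglongrightarrow> l"
  shows "X \<longlonglongrightarrow> l"
proof -
  have "decseq (\<lambda>k. dist (X k) l)"
    using dec by (rule decseq_SucI)
  then obtain d where d: "(\<lambda>k. dist (X k) l) \<longlonglongrightarrow> d"
    using decseq_convergent[of "\<lambda>k. dist (X k) l" 0] by auto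
  have "(\<lambda>k. dist (X (r k)) l) \<longlonglongrightarrow> d"
    using LIMSEQ_subseq_LIMSEQ[OF d r] by (simp add: o_def)
  moreover have "(\<lambda>k. dist (X (r k)) l) \<longlonglongrightarrow> 0"
    using tendsto_dist_iff[THEN iffD1, OF sub] by (simp add: o_def)
  ultimately have "d = 0"
    by (rule LIMSEQ_unique)
  then show ?thesis
    using d by (simp add: tendsto_dist_iff[of X l])
qed

lemma square_Suc_le_four_mult_halves:
  "(real k + 1)\<^sup>2 \<le> 4 * (real (Suc (k div 2)) * real (Suc (k - k div 2)))"
proof -
  define n where "n = k div 2"
  have "k = 2 * n \<or> k = 2 * n + 1"
    unfolding n_def by presburger
  then show ?thesis
    unfolding n_def[symmetric] by (auto simp: power2_eq_square algebra_simps)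
qed

lemma norm_diff_scaleR_square:
  fixes a b :: "'a::real_inner"
  shows "(norm (a - c *\<^sub>R b))\<^sup>2 = (norm a)\<^sup>2 - 2 * c * inner a b + c\<^sup>2 * (norm b)\<^sup>2"
  unfolding power2_norm_eq_inner
  by (simp add: inner_diff_left inner_diff_right inner_commute[of b a] algebra_simps power2_eq_square)

locale smooth_convex =
  fixes F :: "'a::{real_inner,heine_borel} \<Rightarrow> real" and grad :: "'a \<Rightarrow> 'a" and lam :: real
  assumes lam_pos: "lam > 0"
    and convex_F: "convex_on UNIV F"
    and upper_quadratic: "\<And>x z. F z \<le> F x + inner (grad x) (z - x) + (norm (z - x))\<^sup>2 / (2 * lam)"
begin

lemma lower_quadratic: "F x + inner (grad x) (y - x) - (norm (y - x))\<^sup>2 / (2 * lam) \<le> F y"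
proof -
  have "(1/2) *\<^sub>R y + (1 - 1/2) *\<^sub>R (2 *\<^sub>R x - y) = x"
    by (simp add: algebra_simps)
  then have "F x \<le> F y / 2 + F (2 *\<^sub>R x - y) / 2"
    using convex_onD[OF convex_F, of "1/2" y "2 *\<^sub>R x - y"] by simp
  moreover have "F (2 *\<^sub>R x - y) \<le> F x - inner (grad x) (y - x) + (norm (y - x))\<^sup>2 / (2 * lam)"
    using upper_quadratic[where x=x and z="2 *\<^sub>R x - y"]
    by (simp add: scaleR_2 algebra_simps inner_diff_right norm_minus_commute)
  ultimately show ?thesis
    by linarith
qed

lemma has_derivative_grad: "(F has_derivative inner (grad x)) (at x)"
  unfolding has_derivative_iff_norm
proof (intro conjI bounded_linear_inner_right)
  have bound: "norm (F y - F x - inner (grad x) (y - x)) / norm (y - x) \<le> norm (y - x) / (2 * lam)" for y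
  proof -
    have "\<bar>F y - F x - inner (grad x) (y - x)\<bar> \<le> (norm (y - x))\<^sup>2 / (2 * lam)"
      using upper_quadratic[where x=x and z=y] lower_quadratic[of x y] by linarith
    then show ?thesis
      using lam_pos by (cases "y = x") (auto simp: divide_simps power2_eq_square)
  qed
  have "((\<lambda>y. norm (y - x) / (2 * lam)) \<longlongrightarrow> 0) (at x)"
    using lam_pos by (auto intro!: tendsto_eq_intros)
  with tendsto_const show "((\<lambda>y. norm (F y - F x - inner (grad x) (y - x)) / norm (y - x)) \<longlongrightarrow> 0) (at x)"
    by (rule tendsto_sandwich[rotated 2]) (use bound in auto)
qed

lemma continuous_F: "continuous_on UNIV F"
  by (meson continuous_at_imp_continuous_on has_derivative_grad has_derivative_continuous)

lemma gradient_inequality: "F x + inner (grad x) (z - x) \<le> F z"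
proof (rule field_le_epsilon)
  fix e :: real
  assume e: "e > 0"
  define c where "c = (norm (z - x))\<^sup>2 / (2 * lam)"
  define t where "t = min 1 (e / (c + 1))"
  have c: "c \<ge> 0"
    unfolding c_def using lam_pos by simp
  have t: "0 < t" "t \<le> 1" "t * c \<le> e"
  proof -
    show "0 < t" "t \<le> 1"
      unfolding t_def using e c by auto
    have "t * c \<le> e / (c + 1) * (c + 1)"
      unfolding t_def using e c by (intro mult_mono) auto
    then show "t * c \<le> e"
      using c by simp
  qed
  have "(norm (t *\<^sub>R (z - x)))\<^sup>2 / (2 * lam) = t * (t * c)"
    unfolding c_def using t by (simp add: power2_eq_square)
  then have "F x + t * inner (grad x) (z - x) - t * (t * c) \<le> F (x + t *\<^sub>R (z - x))"
    using lower_quadratic[of x "x + t *\<^sub>R (z - x)"] by simp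
  also have "\<dots> \<le> (1 - t) * F x + t * F z"
    using convex_onD[OF convex_F, of t x z] t by (simp add: algebra_simps)
  finally have "t * (inner (grad x) (z - x) - t * c) \<le> t * (F z - F x)"
    by (simp add: algebra_simps)
  then have "inner (grad x) (z - x) - t * c \<le> F z - F x"
    using t by simp
  then show "F x + inner (grad x) (z - x) \<le> F z + e"
    using t by linarith
qed

lemma upper_quadratic_scaled:
  "F (x - lam *\<^sub>R v) \<le> F x - lam * inner (grad x) v + lam * (norm v)\<^sup>2 / 2"
proof -
  have "(norm (lam *\<^sub>R v))\<^sup>2 / (2 * lam) = lam * (norm v)\<^sup>2 / 2"
    using lam_pos by (simp add: power2_eq_square)
  then show ?thesis
    using upper_quadratic[where x=x and z="x - lam *\<^sub>R v"] by simp
qed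

lemma cocoercive: "F x + inner (grad x) (z - x) + lam * (norm (grad z - grad x))\<^sup>2 / 2 \<le> F z"
proof -
  define d where "d = grad z - grad x"
  have "F x + inner (grad x) (z - lam *\<^sub>R d - x) \<le> F (z - lam *\<^sub>R d)"
    by (rule gradient_inequality)
  also have "\<dots> \<le> F z - lam * inner (grad z) d + lam * (norm d)\<^sup>2 / 2"
    by (rule upper_quadratic_scaled)
  finally have "F x + inner (grad x) (z - x) + lam * inner (grad z - grad x) d - lam * (norm d)\<^sup>2 / 2 \<le> F z"
    by (simp add: inner_diff_right inner_diff_left algebra_simps)
  then show ?thesis
    unfolding d_def by (simp add: power2_norm_eq_inner)
qed

lemma grad_cocoercive: "lam * (norm (grad z - grad x))\<^sup>2 \<le> inner (grad z - grad x) (z - x)"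
  using cocoercive[of x z] cocoercive[of z x]
  by (simp add: norm_minus_commute inner_diff_left inner_diff_right)

definition step :: "'a \<Rightarrow> 'a" where
  "step x = x - lam *\<^sub>R grad x"

lemma firmly_nonexpansive_step: "firmly_nonexpansive step"
  unfolding firmly_nonexpansive_def
proof (intro allI)
  fix x y :: 'a
  define a b where "a = x - y" and "b = grad x - grad y"
  have diff: "step x - step y = a - lam *\<^sub>R b"
    unfolding step_def a_def b_def by (simp add: algebra_simps)
  have "lam * (lam * (norm b)\<^sup>2) \<le> lam * inner a b"
    using grad_cocoercive[where z=x and x=y] lam_pos unfolding a_def b_def
    by (simp add: inner_commute)
  moreover have "inner (a - lam *\<^sub>R b) a = (norm a)\<^sup>2 - lam * inner a b"
    by (simp add: inner_diff_left power2_norm_eq_inner inner_commute[of b a])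
  ultimately show "(norm (step x - step y))\<^sup>2 \<le> inner (step x - step y) (x - y)"
    unfolding diff a_def[symmetric] norm_diff_scaleR_square by (simp add: power2_eq_square)
qed

lemma step_decrease: "F (step x) \<le> F x - lam * (norm (grad x))\<^sup>2 / 2"
  using upper_quadratic_scaled[of x "grad x"] unfolding step_def
  by (simp add: power2_norm_eq_inner)

lemma F_step_le: "F (step x) \<le> F x"
  using step_decrease[of x] lam_pos by (simp add: order_trans)

lemma grad_eq_0_if_minimizer:
  assumes "m \<in> argmin_set F"
  shows "grad m = 0"
proof -
  have "F m \<le> F (step m)"
    using assms unfolding argmin_set_def by blast
  then have "lam * (norm (grad m))\<^sup>2 \<le> 0"
    using step_decrease[of m] by linarith
  then show ?thesis
    using lam_pos by (simp add: mult_le_0_iff)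
qed

lemma step_fejer:
  assumes m: "m \<in> argmin_set F"
  shows "F x - F m \<le> (norm (x - m))\<^sup>2 / (2 * lam) - (norm (step x - m))\<^sup>2 / (2 * lam)"
proof -
  have "F x - F m \<le> inner (x - m) (grad x) - lam * (norm (grad x))\<^sup>2 / 2"
    using cocoercive[of x m] grad_eq_0_if_minimizer[OF m]
    by (simp add: inner_diff_left inner_diff_right inner_commute)
  also have "\<dots> = ((norm (x - m))\<^sup>2 - (norm ((x - m) - lam *\<^sub>R grad x))\<^sup>2) / (2 * lam)"
    using lam_pos unfolding norm_diff_scaleR_square by (simp add: field_simps power2_eq_square)
  finally show ?thesis
    by (simp add: step_def diff_divide_distrib algebra_simps)
qed

lemma dist_step_minimizer_le:
  assumes m: "m \<in> argmin_set F"
  shows "norm (step x - m) \<le> norm (x - m)"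
proof -
  have "0 \<le> F x - F m"
    using m unfolding argmin_set_def by simp
  then have "(norm (step x - m))\<^sup>2 / (2 * lam) \<le> (norm (x - m))\<^sup>2 / (2 * lam)"
    using step_fejer[OF m, of x] by linarith
  then have "(norm (step x - m))\<^sup>2 \<le> (norm (x - m))\<^sup>2"
    using lam_pos by (simp add: divide_le_cancel)
  then show ?thesis
    by (rule power2_le_imp_le) simp
qed

lemma norm_grad_step_le: "norm (grad (step x)) \<le> norm (grad x)"
proof -
  have "norm (step x - step (step x)) \<le> norm (x - step x)"
    by (rule firmly_nonexpansive_imp_nonexpansive[OF firmly_nonexpansive_step])
  then show ?thesis
    using lam_pos by (simp add: step_def)
qed

lemma value_bound_iterate:
  assumes m: "m \<in> argmin_set F"
  shows "real (Suc k) * (F ((step ^^ k) x) - F m) + (norm ((step ^^ Suc k) x - m))\<^sup>2 / (2 * lam)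
    \<le> (norm (x - m))\<^sup>2 / (2 * lam)"
proof (induction k)
  case 0
  show ?case
    using step_fejer[OF m, of x] by simp
next
  case (Suc k)
  define y where "y = (step ^^ Suc k) x"
  have "real (Suc k) * (F y - F m) \<le> real (Suc k) * (F ((step ^^ k) x) - F m)"
    using F_step_le[of "(step ^^ k) x"] unfolding y_def by (intro mult_left_mono) auto
  then show ?case
    using Suc.IH step_fejer[OF m, of y] unfolding y_def by (simp add: algebra_simps)
qed

lemma grad_bound_iterate:
  "real (Suc j) * (lam * (norm (grad ((step ^^ (i + j)) x)))\<^sup>2 / 2)
    \<le> F ((step ^^ i) x) - F ((step ^^ Suc (i + j)) x)"
proof (induction j)
  case 0
  show ?case
    using step_decrease[of "(step ^^ i) x"] by simp
next
  case (Suc j)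
  define y where "y = (step ^^ (i + j)) x"
  define G G' where "G = lam * (norm (grad y))\<^sup>2 / 2" and "G' = lam * (norm (grad (step y)))\<^sup>2 / 2"
  have "G' \<le> G"
    unfolding G_def G'_def using norm_grad_step_le[of y] lam_pos
    by (simp add: power_mono mult_left_mono)
  then have "real (Suc j) * G' \<le> real (Suc j) * G"
    by (simp add: mult_left_mono)
  moreover have "real (Suc (Suc j)) * G' = real (Suc j) * G' + G'"
    by (simp add: algebra_simps)
  moreover have "real (Suc j) * G \<le> F ((step ^^ i) x) - F (step y)"
    using Suc.IH unfolding y_def G_def by simp
  moreover have "F (step (step y)) \<le> F (step y) - G'"
    unfolding G'_def by (rule step_decrease)
  ultimately have "real (Suc (Suc j)) * G' \<le> F ((step ^^ i) x) - F (step (step y))"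
    by linarith
  then show ?case
    unfolding y_def G'_def by simp
qed

text \<open>
  Splitting \<open>k = a + j\<close> in halves, the last \<open>j\<close> steps bound \<open>j |grad|\<^sup>2\<close> by the excess value
  after \<open>a\<close> steps, which is \<open>O(1/a)\<close>; this gives \<open>|grad|\<^sup>2 = O(1/k\<^sup>2)\<close>.
\<close>
lemma grad_rate_minimizer:
  assumes m: "m \<in> argmin_set F"
  shows "norm (grad ((step ^^ k) x)) \<le> 2 * norm (x - m) / (lam * (real k + 1))"
proof -
  define a j where "a = k div 2" and "j = k - k div 2"
  define N S where "N = norm (grad ((step ^^ k) x))" and "S = real (Suc a) * real (Suc j)"
  have k: "k = a + j"
    unfolding a_def j_def by simp
  have "F m \<le> F ((step ^^ Suc k) x)"
    using m unfolding argmin_set_def by blast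
  then have "real (Suc j) * (lam * N\<^sup>2 / 2) \<le> F ((step ^^ a) x) - F m"
    using grad_bound_iterate[of j a x] unfolding N_def k by simp
  then have "real (Suc a) * (real (Suc j) * (lam * N\<^sup>2 / 2)) \<le> real (Suc a) * (F ((step ^^ a) x) - F m)"
    by (rule mult_left_mono) simp
  also have "\<dots> \<le> (norm (x - m))\<^sup>2 / (2 * lam)"
    using value_bound_iterate[OF m, of a x] lam_pos
      divide_nonneg_pos[OF zero_le_power2, of lam "norm ((step ^^ Suc a) x - m)"]
    by linarith
  finally have product_bound: "lam\<^sup>2 * N\<^sup>2 * S \<le> (norm (x - m))\<^sup>2"
    unfolding S_def using lam_pos by (simp add: field_simps power2_eq_square)
  have "(real k + 1)\<^sup>2 \<le> 4 * S"
    unfolding S_def a_def j_def by (rule square_Suc_le_four_mult_halves)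
  then have "lam\<^sup>2 * N\<^sup>2 * (real k + 1)\<^sup>2 \<le> lam\<^sup>2 * N\<^sup>2 * (4 * S)"
    by (rule mult_left_mono) simp
  also have "\<dots> \<le> (2 * norm (x - m))\<^sup>2"
    using product_bound by (simp add: power_mult_distrib)
  finally have "(lam * (real k + 1) * N)\<^sup>2 \<le> (2 * norm (x - m))\<^sup>2"
    by (simp add: power_mult_distrib ac_simps)
  then have "lam * (real k + 1) * N \<le> 2 * norm (x - m)"
    by (rule power2_le_imp_le) simp
  moreover have "lam * (real k + 1) > 0"
    using lam_pos by simp
  ultimately show ?thesis
    unfolding N_def by (simp add: pos_le_divide_eq mult.commute)
qed

lemma value_rate_minimizer:
  assumes m: "m \<in> argmin_set F"
  shows "F ((step ^^ k) x) - F m \<le> (norm (x - m))\<^sup>2 / (2 * lam * real (Suc k))"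
proof -
  have "real (Suc k) * (F ((step ^^ k) x) - F m) \<le> (norm (x - m))\<^sup>2 / (2 * lam)"
    using value_bound_iterate[OF m, of k x] lam_pos
      divide_nonneg_pos[OF zero_le_power2, of lam "norm ((step ^^ Suc k) x - m)"]
    by linarith
  then have "(F ((step ^^ k) x) - F m) * (2 * lam * real (Suc k)) \<le> (norm (x - m))\<^sup>2"
    using lam_pos by (simp add: field_simps)
  moreover have "0 < 2 * lam * real (Suc k)"
    using lam_pos by simp
  ultimately show ?thesis
    by (simp add: pos_le_divide_eq)
qed

lemma value_tendsto_minimum:
  assumes m: "m \<in> argmin_set F"
  shows "(\<lambda>k. F ((step ^^ k) x)) \<longlonglongrightarrow> F m"
proof (rule tendsto_sandwich)
  show "\<forall>\<^sub>F k in sequentially. F m \<le> F ((step ^^ k) x)"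
    using m unfolding argmin_set_def by simp
  show "\<forall>\<^sub>F k in sequentially. F ((step ^^ k) x) \<le> F m + (norm (x - m))\<^sup>2 / (2 * lam * real (Suc k))"
    using value_rate_minimizer[OF m] by (simp add: algebra_simps del: of_nat_Suc)
  have "(\<lambda>k. (norm (x - m))\<^sup>2 / (2 * lam * real (Suc k))) \<longlonglongrightarrow> 0"
    using LIMSEQ_Suc[OF lim_const_over_n[of "(norm (x - m))\<^sup>2 / (2 * lam)"]]
    by (simp del: of_nat_Suc)
  then show "(\<lambda>k. F m + (norm (x - m))\<^sup>2 / (2 * lam * real (Suc k))) \<longlonglongrightarrow> F m"
    using tendsto_add[OF tendsto_const[of "F m"]] by force
qed simp

lemma closed_argmin_set: "closed (argmin_set F)"
proof -
  have "closed (\<Inter>y. {x. F x \<le> F y})"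
    by (intro closed_INT ballI closed_Collect_le continuous_F continuous_on_const)
  moreover have "argmin_set F = (\<Inter>y. {x. F x \<le> F y})"
    unfolding argmin_set_def by blast
  ultimately show ?thesis
    by simp
qed

lemma nearest_minimizer:
  assumes "argmin_set F \<noteq> {}"
  obtains m where "m \<in> argmin_set F" "infdist x (argmin_set F) = norm (x - m)"
proof -
  obtain m where "m \<in> argmin_set F" "infdist x (argmin_set F) = dist x m"
    using infdist_attains_inf[OF closed_argmin_set assms] by blast
  then show ?thesis
    using that by (simp add: dist_norm)
qed

lemma INF_eq_minimizer:
  assumes "m \<in> argmin_set F"
  shows "(INF y. F y) = F m"
  using assms unfolding argmin_set_def by (intro cInf_eq_minimum) auto

lemma gradient_descent_value_rate:
  assumes "argmin_set F \<noteq> {}" and k: "k \<ge> 1"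
  shows "F ((step ^^ k) x) - (INF y. F y) \<le> (infdist x (argmin_set F))\<^sup>2 / (2 * lam * real k)"
proof -
  obtain m where m: "m \<in> argmin_set F" and d: "infdist x (argmin_set F) = norm (x - m)"
    using nearest_minimizer[OF assms(1)] by blast
  have "F ((step ^^ k) x) - F m \<le> (norm (x - m))\<^sup>2 / (2 * lam * real (Suc k))"
    by (rule value_rate_minimizer[OF m])
  also have "\<dots> \<le> (norm (x - m))\<^sup>2 / (2 * lam * real k)"
    using k lam_pos by (intro divide_left_mono) auto
  finally show ?thesis
    unfolding INF_eq_minimizer[OF m] d .
qed

lemma gradient_descent_grad_rate:
  assumes "argmin_set F \<noteq> {}"
  shows "norm (grad ((step ^^ k) x)) \<le> 2 * infdist x (argmin_set F) / (lam * (real k + 1))"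
proof -
  obtain m where "m \<in> argmin_set F" "infdist x (argmin_set F) = norm (x - m)"
    using nearest_minimizer[OF assms] by blast
  then show ?thesis
    using grad_rate_minimizer by simp
qed

lemma gradient_descent_converges:
  assumes "argmin_set F \<noteq> {}"
  shows "\<exists>l \<in> argmin_set F. (\<lambda>k. (step ^^ k) x) \<longlonglongrightarrow> l"
proof -
  define X where "X k = (step ^^ k) x" for k
  obtain m where m: "m \<in> argmin_set F"
    using assms by blast
  have fejer: "dist (X (Suc k)) l \<le> dist (X k) l" if "l \<in> argmin_set F" for k l
    using dist_step_minimizer_le[OF that] by (simp add: X_def dist_norm)
  have "dist (X k) m \<le> dist (X 0) m" for k
    using decseqD[OF decseq_SucI[of "\<lambda>k. dist (X k) m"], of 0 k] fejer[OF m] by simp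
  then have "bounded (range X)"
    by (auto simp: bounded_any_center[of _ m] dist_commute)
  then obtain l r where r: "strict_mono r" and sub: "(X \<circ> r) \<longlonglongrightarrow> l"
    using bounded_imp_convergent_subsequence by blast
  have "(\<lambda>k. F (X k)) \<longlonglongrightarrow> F m"
    unfolding X_def using m by (rule value_tendsto_minimum)
  then have "(\<lambda>k. F (X (r k))) \<longlonglongrightarrow> F m"
    using LIMSEQ_subseq_LIMSEQ[OF _ r] by (simp add: o_def)
  moreover have "(\<lambda>k. F (X (r k))) \<longlonglongrightarrow> F l"
    using continuous_on_tendsto_compose[OF continuous_F sub] by (simp add: o_def)
  ultimately have "F m = F l"
    by (rule LIMSEQ_unique)
  then have l: "l \<in> argmin_set F"
    using m unfolding argmin_set_def by simp
  have "X \<longlonglongrightarrow> l"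
    using fejer[OF l] r sub by (rule decreasing_dist_subseq_imp_LIMSEQ)
  then show ?thesis
    using l unfolding X_def by blast
qed

section \<open>The gradient step as a proximal map\<close>

definition psi :: "'a \<Rightarrow> real" where
  "psi x = (norm x)\<^sup>2 / 2 - lam * F x"

lemma psi_tangent_gap: "psi z - psi x - inner (step x) (z - x) = (norm (z - x))\<^sup>2 / 2 - lam * (F z - F x - inner (grad x) (z - x))"
  unfolding psi_def step_def
  by (simp add: power2_norm_eq_inner inner_diff_left inner_diff_right inner_commute field_simps)

lemma psi_above_tangent: "psi x + inner (step x) (z - x) \<le> psi z"
proof -
  have "lam * (F z - F x - inner (grad x) (z - x)) \<le> lam * ((norm (z - x))\<^sup>2 / (2 * lam))"
    using upper_quadratic[where x=x and z=z] lam_pos by (intro mult_left_mono) auto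
  then show ?thesis
    using psi_tangent_gap[of z x] lam_pos by simp
qed

lemma psi_below_quadratic: "psi z \<le> psi x + inner (step x) (z - x) + (norm (z - x))\<^sup>2 / 2"
proof -
  have "0 \<le> lam * (F z - F x - inner (grad x) (z - x))"
    using gradient_inequality[of x z] lam_pos by simp
  then show ?thesis
    using psi_tangent_gap[of z x] by simp
qed

lemma surj_step_if_coercive:
  assumes coercive: "\<And>p. filterlim (\<lambda>x. psi x - inner x p) at_top at_infinity"
  shows "surj step"
  unfolding surj_def
proof
  fix p
  have "continuous_on UNIV (\<lambda>x. psi x - inner x p)"
    unfolding psi_def by (intro continuous_intros continuous_F) auto
  then obtain m where m: "\<And>y. psi m - inner m p \<le> psi y - inner y p"
    using continuous_coercive_attains_min[OF _ coercive] by blast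
  define d where "d = step m - p"
  have d: "(norm d)\<^sup>2 = inner (step m) d - inner d p"
    using inner_diff_left[of "step m" p d] unfolding d_def[symmetric] power2_norm_eq_inner
    by (simp add: inner_commute)
  have "psi (m - d) \<le> psi m - inner (step m) d + (norm d)\<^sup>2 / 2"
    using psi_below_quadratic[of "m - d" m] by (simp add: inner_minus_right)
  moreover have "psi m - inner m p \<le> psi (m - d) - inner m p + inner d p"
    using m[of "m - d"] by (simp add: inner_diff_left)
  ultimately have "(norm d)\<^sup>2 \<le> 0"
    using d by linarith
  then show "\<exists>m. p = step m"
    unfolding d_def by auto
qed

text \<open>
  The Fenchel conjugate of \<open>psi\<close>: as \<open>psi\<close> is convex with gradient \<open>step\<close>, the supremum of
  \<open>\<langle>x, p\<rangle> - psi x\<close> is attained at any preimage of \<open>p\<close> under \<open>step\<close>.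
\<close>
definition psi_conj :: "'a \<Rightarrow> real" where
  "psi_conj p = inner (inv step p) p - psi (inv step p)"

definition prox_potential :: "'a \<Rightarrow> real" where
  "prox_potential p = psi_conj p - (norm p)\<^sup>2 / 2"

context
  assumes surj: "surj step"
begin

lemma psi_conj_ge: "inner x q - psi x + (norm (q - step x))\<^sup>2 / 2 \<le> psi_conj q"
proof -
  define y z where "y = inv step q" and "z = x + (q - step x)"
  have q: "step y = q"
    unfolding y_def using surj by (rule surj_f_inv_f)
  have "psi z \<le> psi x + inner (step x) (q - step x) + (norm (q - step x))\<^sup>2 / 2"
    using psi_below_quadratic[of z x] unfolding z_def by simp
  moreover have "psi y + inner q (z - y) \<le> psi z"
    using psi_above_tangent[of y z] unfolding q .
  moreover have "inner q (z - y) = inner x q + inner (q - step x) q - inner y q"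
    unfolding z_def by (simp add: inner_diff_right inner_add_right inner_commute)
  moreover have "inner (q - step x) q - inner (step x) (q - step x) = (norm (q - step x))\<^sup>2"
    by (simp add: power2_norm_eq_inner inner_diff_left inner_diff_right inner_commute)
  ultimately show ?thesis
    unfolding psi_conj_def y_def[symmetric] by linarith
qed

lemma psi_conj_step: "psi_conj (step x) = inner x (step x) - psi x"
proof (rule antisym)
  define y where "y = inv step (step x)"
  have "step y = step x"
    unfolding y_def using surj by (rule surj_f_inv_f)
  then have "psi x + inner (step x) (y - x) \<le> psi y"
    using psi_above_tangent[of x y] by simp
  then show "psi_conj (step x) \<le> inner x (step x) - psi x"
    unfolding psi_conj_def y_def[symmetric] by (simp add: inner_diff_left inner_commute)
  show "inner x (step x) - psi x \<le> psi_conj (step x)"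
    using psi_conj_ge[of x "step x"] by simp
qed

lemma prox_potential_subgradient:
  "prox_potential (step x) + inner (x - step x) (y - step x) \<le> prox_potential y"
  using psi_conj_ge[of x y] psi_conj_step[of x]
  unfolding prox_potential_def
  by (simp add: power2_norm_eq_inner inner_diff_left inner_diff_right inner_commute field_simps)

lemma convex_prox_potential: "convex_on UNIV prox_potential"
proof (rule convex_onI)
  fix t :: real and p q :: 'a
  assume t: "0 < t" "t < 1"
  define r where "r = (1 - t) *\<^sub>R p + t *\<^sub>R q"
  obtain x where x: "step x = r"
    using surj by (metis surjD)
  define v where "v = x - step x"
  have "(1 - t) * (prox_potential r + inner v (p - r)) + t * (prox_potential r + inner v (q - r))
      \<le> (1 - t) * prox_potential p + t * prox_potential q"
    using t prox_potential_subgradient[of x p] prox_potential_subgradient[of x q]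
    unfolding x v_def by (intro add_mono mult_left_mono) auto
  moreover have "(1 - t) * inner v (p - r) + t * inner v (q - r) = 0"
    unfolding r_def by (simp add: inner_diff_right inner_add_right algebra_simps)
  ultimately show "prox_potential ((1 - t) *\<^sub>R p + t *\<^sub>R q) \<le> (1 - t) * prox_potential p + t * prox_potential q"
    unfolding r_def[symmetric] by (simp add: algebra_simps)
qed auto

lemma prox_objective_ge:
  "prox_potential (step x) + (norm (step x - x))\<^sup>2 / 2 + (norm (y - step x))\<^sup>2 / 2
    \<le> prox_potential y + (norm (y - x))\<^sup>2 / 2"
proof -
  have "(norm (y - x))\<^sup>2 = (norm (y - step x))\<^sup>2 + 2 * inner (step x - x) (y - step x) + (norm (step x - x))\<^sup>2"
    using norm_diff_scaleR_square[of "y - step x" "-1" "step x - x"]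
    by (simp add: inner_commute)
  then show ?thesis
    using prox_potential_subgradient[of x y] by (simp add: inner_diff_left add_divide_distrib diff_divide_distrib)
qed

lemma prox_eq_step:
  assumes c: "c > 0"
  shows "prox c (\<lambda>p. prox_potential p / c) = step"
proof
  fix x
  have objective: "c * (prox_potential p / c) = prox_potential p" for p
    using c by simp
  show "prox c (\<lambda>p. prox_potential p / c) x = step x"
    unfolding prox_def objective
  proof (rule the_equality)
    show "\<forall>z. prox_potential (step x) + (norm (step x - x))\<^sup>2 / 2 \<le> prox_potential z + (norm (z - x))\<^sup>2 / 2"
    proof
      fix z
      show "prox_potential (step x) + (norm (step x - x))\<^sup>2 / 2 \<le> prox_potential z + (norm (z - x))\<^sup>2 / 2"
        using prox_objective_ge[of x z] zero_le_power2[of "norm (z - step x)"] by linarith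
    qed
    fix y
    assume "\<forall>z. prox_potential y + (norm (y - x))\<^sup>2 / 2 \<le> prox_potential z + (norm (z - x))\<^sup>2 / 2"
    then have "prox_potential y + (norm (y - x))\<^sup>2 / 2 \<le> prox_potential (step x) + (norm (step x - x))\<^sup>2 / 2"
      by blast
    then have "(norm (y - step x))\<^sup>2 \<le> 0"
      using prox_objective_ge[of x y] by linarith
    then show "y = step x"
      by simp
  qed
qed

lemma step_eq_prox:
  assumes "c > 0"
  shows "\<exists>H. convex_on UNIV H \<and> step = prox c H"
proof (intro exI conjI)
  show "convex_on UNIV (\<lambda>p. prox_potential p / c)"
    using assms by (intro convex_on_cdiv convex_prox_potential) auto
  show "step = prox c (\<lambda>p. prox_potential p / c)"
    using prox_eq_step[OF assms] by simp
qed

end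

end


section \<open>Gaussian smoothing\<close>

lemma mult_exp_neg_square_le:
  fixes r c :: real
  assumes "c > 0" "r \<ge> 0"
  shows "r * exp (- r\<^sup>2 / (2 * c)) \<le> 1 + 2 * c"
proof -
  define u where "u = r\<^sup>2 / (2 * c)"
  have u: "u \<ge> 0" "r\<^sup>2 = 2 * c * u"
    unfolding u_def using assms by auto
  have "r \<le> 1 + r\<^sup>2"
    using zero_le_power2[of "r - 1/2"] unfolding power2_diff by (simp add: power2_eq_square)
  then have "r * exp (- u) \<le> (1 + 2 * c * u) * exp (- u)"
    using u by (intro mult_right_mono) auto
  also have "\<dots> = exp (- u) + 2 * c * (u * exp (- u))"
    by (simp add: algebra_simps)
  also have "\<dots> \<le> 1 + 2 * c * 1"
  proof -
    have "u \<le> exp u"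
      using exp_ge_add_one_self[of u] by linarith
    then have "u * exp (- u) \<le> 1"
      by (simp add: exp_minus field_simps)
    then show ?thesis
      using u assms by (intro add_mono mult_left_mono) auto
  qed
  finally show ?thesis
    unfolding u_def by simp
qed

lemma exp_ge_tangent:
  fixes a u :: real
  shows "exp a * (1 + (u - a)) \<le> exp u"
proof -
  have "exp a * (1 + (u - a)) \<le> exp a * exp (u - a)"
    using exp_ge_add_one_self[of "u - a"] by (intro mult_left_mono) auto
  then show ?thesis
    by (simp add: exp_diff)
qed

lemma exists_unit_scaleR_norm:
  fixes x :: "'a::euclidean_space"
  shows "\<exists>u. norm u = 1 \<and> x = norm x *\<^sub>R u"
proof (cases "x = 0")
  case True
  then show ?thesis
    using vector_choose_size[of 1] by auto
next
  case False
  then show ?thesis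
    by (intro exI[of _ "sgn x"]) (simp add: norm_sgn sgn_div_norm)
qed

text \<open>\<open>gauss_density s 0 0 = (2 \<pi> s) powr (- DIM('a) / 2)\<close> serves as the normalising constant.\<close>
lemma gauss_density_eq:
  fixes x y :: "'a::euclidean_space"
  shows "gauss_density s x y = gauss_density s (0::'a) 0 * exp (- (norm (y - x))\<^sup>2 / (2 * s))"
  unfolding gauss_density_def by simp

lemma gauss_density_pos: "s > 0 \<Longrightarrow> gauss_density s x y > 0"
  unfolding gauss_density_def by simp

lemma gauss_density_le_center:
  fixes x y :: "'a::euclidean_space"
  shows "s > 0 \<Longrightarrow> gauss_density s x y \<le> gauss_density s (0::'a) 0"
  unfolding gauss_density_eq[of s x y] using gauss_density_pos[of s "0::'a" 0] by simp

lemma continuous_gauss_density: "s > 0 \<Longrightarrow> continuous_on UNIV (gauss_density s x)"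
  unfolding gauss_density_def by (intro continuous_intros) auto

lemma gauss_density_tendsto_0:
  fixes y :: "'a::euclidean_space"
  assumes "s > 0"
  shows "((\<lambda>x. gauss_density s x y) \<longlongrightarrow> 0) at_infinity"
proof -
  have "filterlim (\<lambda>x. norm (x + - y)) at_top at_infinity"
    by (intro filterlim_at_infinity_imp_norm_at_top
        tendsto_add_filterlim_at_infinity'[OF filterlim_ident tendsto_const])
  then have "filterlim (\<lambda>x. (norm (y - x))\<^sup>2) at_top at_infinity"
    by (simp add: filterlim_pow_at_top norm_minus_commute)
  then have "filterlim (\<lambda>x. 1 / (2 * s) * (norm (y - x))\<^sup>2) at_top at_infinity"
    using assms by (intro filterlim_tendsto_pos_mult_at_top[OF tendsto_const]) auto
  then have "filterlim (\<lambda>x. - (norm (y - x))\<^sup>2 / (2 * s)) at_bot at_infinity"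
    by (simp add: filterlim_uminus_at_top)
  from filterlim_compose[OF exp_at_bot this]
  have "((\<lambda>x. gauss_density s (0::'a) 0 * exp (- (norm (y - x))\<^sup>2 / (2 * s))) \<longlongrightarrow> gauss_density s (0::'a) 0 * 0) at_infinity"
    by (intro tendsto_mult tendsto_const)
  then show ?thesis
    unfolding gauss_density_eq[of s _ y] by simp
qed

locale gaussian_smoothing =
  fixes s :: real and w :: "'a::euclidean_space \<Rightarrow> real"
  assumes s_pos: "s > 0"
    and w_pos: "\<And>y. w y > 0"
    and continuous_w: "continuous_on UNIV w"
    and integrable_w: "integrable lborel w"
begin

lemma integrable_weighted_density: "integrable lborel (\<lambda>y. gauss_density s x y * w y)"
proof (rule Bochner_Integration.integrable_bound)
  show "integrable lborel (\<lambda>y. gauss_density s (0::'a) 0 * w y)"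
    using integrable_w by simp
  show "(\<lambda>y. gauss_density s x y * w y) \<in> borel_measurable lborel"
    using borel_measurable_continuous_onI[OF continuous_on_mult[OF continuous_gauss_density[OF s_pos] continuous_w]]
    by simp
  show "AE y in lborel. norm (gauss_density s x y * w y) \<le> norm (gauss_density s (0::'a) 0 * w y)"
    using gauss_density_le_center[OF s_pos] w_pos
    by (intro AE_I2) (simp add: abs_mult abs_of_pos[OF gauss_density_pos[OF s_pos]] less_imp_le mult_right_mono)
qed

lemma integrable_weighted_moment: "integrable lborel (\<lambda>y. gauss_density s x y *\<^sub>R (w y *\<^sub>R y))"
proof (rule Bochner_Integration.integrable_bound)
  define C where "C = gauss_density s (0::'a) 0 * (norm x + 1 + 2 * s)"
  have C: "C \<ge> 0"
    unfolding C_def using gauss_density_pos[OF s_pos, of "0::'a" 0] s_pos by simp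
  show "integrable lborel (\<lambda>y. C * w y)"
    using integrable_w by simp
  show "(\<lambda>y. gauss_density s x y *\<^sub>R (w y *\<^sub>R y)) \<in> borel_measurable lborel"
    using borel_measurable_continuous_onI[OF continuous_on_scaleR[OF continuous_gauss_density[OF s_pos]
          continuous_on_scaleR[OF continuous_w continuous_on_id]]]
    by simp
  have bound: "gauss_density s x y * norm y \<le> C" for y
  proof -
    define r where "r = norm (y - x)"
    have "norm y \<le> norm x + r"
      using norm_triangle_sub[of y x] unfolding r_def by simp
    then have "exp (- r\<^sup>2 / (2 * s)) * norm y \<le> exp (- r\<^sup>2 / (2 * s)) * (norm x + r)"
      by (rule mult_left_mono) simp
    also have "\<dots> = exp (- r\<^sup>2 / (2 * s)) * norm x + r * exp (- r\<^sup>2 / (2 * s))"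
      by (simp add: algebra_simps)
    also have "\<dots> \<le> 1 * norm x + (1 + 2 * s)"
      using s_pos mult_exp_neg_square_le[OF s_pos, of r] unfolding r_def
      by (intro add_mono mult_right_mono) auto
    finally have "gauss_density s (0::'a) 0 * (exp (- r\<^sup>2 / (2 * s)) * norm y) \<le> C"
      unfolding C_def using gauss_density_pos[OF s_pos, of "0::'a" 0] by (simp add: mult_left_mono)
    then show ?thesis
      unfolding gauss_density_eq[of s x y] r_def by (simp add: mult.assoc)
  qed
  show "AE y in lborel. norm (gauss_density s x y *\<^sub>R (w y *\<^sub>R y)) \<le> norm (C * w y)"
  proof (rule AE_I2)
    fix y
    have "norm (gauss_density s x y *\<^sub>R (w y *\<^sub>R y)) = (gauss_density s x y * norm y) * w y"
      using gauss_density_pos[OF s_pos, of x y] w_pos[of y] by (simp add: abs_of_pos ac_simps)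
    also have "\<dots> \<le> C * w y"
      using bound w_pos[of y] by (simp add: mult_right_mono)
    also have "\<dots> = norm (C * w y)"
      using C w_pos[of y] by simp
    finally show "norm (gauss_density s x y *\<^sub>R (w y *\<^sub>R y)) \<le> norm (C * w y)" .
  qed
qed

definition Z :: "'a \<Rightarrow> real" where
  "Z x = gauss_expect s x w"

definition mean :: "'a \<Rightarrow> 'a" where
  "mean x = (1 / Z x) *\<^sub>R gauss_expect s x (\<lambda>y. w y *\<^sub>R y)"

lemma Z_eq_integral: "Z x = (\<integral>y. gauss_density s x y * w y \<partial>lborel)"
  unfolding Z_def gauss_expect_def by simp

lemma w_lower_bound:
  obtains m where "m > 0" "\<And>y. y \<in> cball c r \<Longrightarrow> m \<le> w y"
proof (cases "cball c r = {}")
  case True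
  show ?thesis
    by (rule that[of 1]) (use True in auto)
next
  case False
  obtain y0 where "\<forall>y \<in> cball c r. w y0 \<le> w y"
    using continuous_attains_inf[OF compact_cball False continuous_on_subset[OF continuous_w subset_UNIV]]
    by auto
  then show ?thesis
    by (intro that[of "w y0"] w_pos) auto
qed

lemma Z_ge_ball:
  assumes w_ge: "\<And>y. y \<in> ball c 1 \<Longrightarrow> m \<le> w y" and m: "0 \<le> m"
  shows "gauss_density s (0::'a) 0 * exp (- (dist c x + 1)\<^sup>2 / (2 * s)) * m * measure lborel (ball c 1) \<le> Z x"
proof -
  define E where "E = gauss_density s (0::'a) 0 * exp (- (dist c x + 1)\<^sup>2 / (2 * s))"
  have E: "0 \<le> E"
    unfolding E_def using gauss_density_pos[OF s_pos, of "0::'a" 0] by (intro mult_nonneg_nonneg) auto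
  have "E * m * indicator (ball c 1) y \<le> gauss_density s x y * w y" for y
  proof (cases "y \<in> ball c 1")
    case True
    then have "dist y x \<le> dist c x + 1"
      using dist_triangle[of y x c] by (simp add: dist_commute)
    then have "norm (y - x) \<le> dist c x + 1"
      by (simp add: dist_norm)
    then have "(norm (y - x))\<^sup>2 \<le> (dist c x + 1)\<^sup>2"
      by (simp add: power_mono)
    then have "E \<le> gauss_density s x y"
      unfolding E_def gauss_density_eq[of s x y] using s_pos gauss_density_pos[OF s_pos, of "0::'a" 0]
      by (simp add: divide_right_mono)
    then have "E * m \<le> gauss_density s x y * w y"
      using w_ge[OF True] m E by (intro mult_mono) auto
    then show ?thesis
      using True by simp
  next
    case False
    then show ?thesis
      using gauss_density_pos[OF s_pos, of x y] w_pos[of y] by simp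
  qed
  moreover have "integrable lborel (\<lambda>y. E * m * indicator (ball c 1) y)"
    using emeasure_lborel_ball_finite[of c 1] by (intro integrable_mult_right integrable_real_indicator) auto
  ultimately have "(\<integral>y. E * m * indicator (ball c 1) y \<partial>lborel) \<le> Z x"
    unfolding Z_eq_integral by (intro integral_mono integrable_weighted_density)
  then show ?thesis
    unfolding E_def by simp
qed

lemma Z_pos: "Z x > 0"
proof -
  obtain m where m: "m > 0" "\<And>y. y \<in> cball x 1 \<Longrightarrow> m \<le> w y"
    using w_lower_bound by blast
  have "0 < gauss_density s (0::'a) 0 * exp (- (dist x x + 1)\<^sup>2 / (2 * s)) * m * measure lborel (ball x 1)"
    using gauss_density_pos[OF s_pos, of "0::'a" 0] m(1) by (intro mult_pos_pos) auto
  also have "\<dots> \<le> Z x"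
    using m by (intro Z_ge_ball) auto
  finally show ?thesis .
qed

lemma first_moment: "gauss_expect s x (\<lambda>y. w y *\<^sub>R y) = Z x *\<^sub>R mean x"
  unfolding mean_def using Z_pos[of x] by simp

lemma centered_moment_eq:
  "(\<lambda>y. gauss_density s x y * w y * inner (y - mean x) h)
    = (\<lambda>y. inner (gauss_density s x y *\<^sub>R (w y *\<^sub>R y)) h - inner (mean x) h * (gauss_density s x y * w y))"
  by (simp add: inner_diff_left algebra_simps)

lemma integrable_centered_moment:
  "integrable lborel (\<lambda>y. gauss_density s x y * w y * inner (y - mean x) h)"
  unfolding centered_moment_eq
  by (intro Bochner_Integration.integrable_diff integrable_mult_right integrable_inner_left
      integrable_weighted_moment integrable_weighted_density)

lemma integral_centered_moment:
  "(\<integral>y. gauss_density s x y * w y * inner (y - mean x) h \<partial>lborel) = 0"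
proof -
  have "(\<integral>y. inner (gauss_density s x y *\<^sub>R (w y *\<^sub>R y)) h \<partial>lborel) = inner (Z x *\<^sub>R mean x) h"
    using integral_inner_left[OF integrable_weighted_moment, of x h] first_moment[of x]
    unfolding gauss_expect_def by simp
  then show ?thesis
    unfolding centered_moment_eq
    using integrable_weighted_density[of x] integrable_inner_left[OF integrable_weighted_moment, of x h]
    by (simp add: Z_eq_integral)
qed

lemma gauss_density_shift:
  "gauss_density s z y = gauss_density s x y * exp ((inner (y - x) (z - x) - (norm (z - x))\<^sup>2 / 2) / s)"
proof -
  have norm_eq: "(norm (y - z))\<^sup>2 = (norm (y - x))\<^sup>2 - 2 * inner (y - x) (z - x) + (norm (z - x))\<^sup>2"
    by (simp add: power2_norm_eq_inner inner_diff_left inner_diff_right inner_commute algebra_simps)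
  have "- (norm (y - z))\<^sup>2 / (2 * s) = - (norm (y - x))\<^sup>2 / (2 * s) + (inner (y - x) (z - x) - (norm (z - x))\<^sup>2 / 2) / s"
    unfolding norm_eq using s_pos by (simp add: field_simps)
  then have "exp (- (norm (y - z))\<^sup>2 / (2 * s))
      = exp (- (norm (y - x))\<^sup>2 / (2 * s)) * exp ((inner (y - x) (z - x) - (norm (z - x))\<^sup>2 / 2) / s)"
    by (simp add: exp_add[symmetric])
  then show ?thesis
    unfolding gauss_density_eq[of s z y] gauss_density_eq[of s x y] by simp
qed

text \<open>
  The tangent bound for \<open>exp\<close> at the tilted mean leaves a term linear in \<open>y - mean x\<close>,
  which integrates to zero.
\<close>
lemma Z_shift_lower: "exp ((inner (mean x - x) (z - x) - (norm (z - x))\<^sup>2 / 2) / s) * Z x \<le> Z z"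
proof -
  define h a where "h = z - x" and "a = (inner (mean x - x) h - (norm h)\<^sup>2 / 2) / s"
  define F where "F y = gauss_density s x y * w y" for y
  have pointwise: "exp a * (F y + F y * inner (y - mean x) h / s) \<le> gauss_density s z y * w y" for y
  proof -
    define u where "u = (inner (y - x) h - (norm h)\<^sup>2 / 2) / s"
    have "u - a = inner (y - mean x) h / s"
      unfolding u_def a_def using s_pos by (simp add: field_simps inner_diff_left)
    moreover have "0 \<le> F y"
      unfolding F_def using gauss_density_pos[OF s_pos, of x y] w_pos[of y] by simp
    ultimately have "F y * (exp a * (1 + inner (y - mean x) h / s)) \<le> F y * exp u"
      using exp_ge_tangent[of a u] by (intro mult_left_mono) auto
    moreover have "gauss_density s z y * w y = F y * exp u"
      unfolding F_def u_def h_def gauss_density_shift[of z y x] by simp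
    ultimately show ?thesis
      by (simp add: algebra_simps)
  qed
  have integrable: "integrable lborel (\<lambda>y. exp a * (F y + F y * inner (y - mean x) h / s))"
    unfolding F_def
    by (intro integrable_mult_right Bochner_Integration.integrable_add integrable_divide
        integrable_weighted_density integrable_centered_moment)
  have "(\<integral>y. exp a * (F y + F y * inner (y - mean x) h / s) \<partial>lborel) = exp a * Z x"
    unfolding F_def Z_eq_integral
    using integrable_weighted_density[of x] integrable_centered_moment[of x h] integral_centered_moment[of x h]
    by simp
  moreover have "(\<integral>y. exp a * (F y + F y * inner (y - mean x) h / s) \<partial>lborel) \<le> Z z"
    unfolding Z_eq_integral[of z]
    using integrable integrable_weighted_density pointwise by (rule integral_mono)
  ultimately show ?thesis
    unfolding a_def h_def by simp
qed

lemma neg_log_Z_upper_quadratic: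
  "- s * ln (Z z) \<le> - s * ln (Z x) + inner (x - mean x) (z - x) + (norm (z - x))\<^sup>2 / 2"
proof -
  define a where "a = (inner (mean x - x) (z - x) - (norm (z - x))\<^sup>2 / 2) / s"
  have "ln (exp a * Z x) \<le> ln (Z z)"
    using Z_shift_lower[of x z] Z_pos[of x] Z_pos[of z] unfolding a_def by simp
  then have "s * a + s * ln (Z x) \<le> s * ln (Z z)"
    using Z_pos[of x] s_pos by (simp add: ln_mult flip: distrib_left)
  moreover have "s * a = - inner (x - mean x) (z - x) - (norm (z - x))\<^sup>2 / 2"
    unfolding a_def using s_pos by (simp add: inner_diff_left)
  ultimately show ?thesis
    by linarith
qed

lemma Z_tendsto_0_sequentially:
  assumes "filterlim X at_infinity sequentially"
  shows "(\<lambda>n. Z (X n)) \<longlonglongrightarrow> 0"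
proof -
  have "(\<lambda>n. \<integral>y. gauss_density s (X n) y * w y \<partial>lborel) \<longlonglongrightarrow> integral\<^sup>L lborel (\<lambda>y::'a. 0::real)"
  proof (rule integral_dominated_convergence[where w="\<lambda>y. gauss_density s (0::'a) 0 * w y"])
    show "integrable lborel (\<lambda>y. gauss_density s (0::'a) 0 * w y)"
      using integrable_w by simp
    show "(\<lambda>y. gauss_density s (X n) y * w y) \<in> borel_measurable lborel" for n
      using integrable_weighted_density by (rule borel_measurable_integrable)
    show "AE y in lborel. (\<lambda>n. gauss_density s (X n) y * w y) \<longlonglongrightarrow> 0"
      using filterlim_compose[OF gauss_density_tendsto_0[OF s_pos] assms]
      by (intro AE_I2) (auto intro: tendsto_mult_left_zero)
    show "AE y in lborel. norm (gauss_density s (X n) y * w y) \<le> gauss_density s (0::'a) 0 * w y" for n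
      using gauss_density_le_center[OF s_pos] w_pos
      by (intro AE_I2) (simp add: abs_mult abs_of_pos[OF gauss_density_pos[OF s_pos]] less_imp_le mult_right_mono)
  qed simp
  then show ?thesis
    unfolding Z_eq_integral by simp
qed

lemma Z_tendsto_0: "(Z \<longlongrightarrow> 0) at_infinity"
proof (rule order_tendstoI)
  fix a :: real
  assume "a < 0"
  then show "\<forall>\<^sub>F x in at_infinity. a < Z x"
    using Z_pos by (auto intro: always_eventually less_trans)
next
  fix a :: real
  assume a: "0 < a"
  show "\<forall>\<^sub>F x in at_infinity. Z x < a"
  proof (rule ccontr)
    assume "\<not> (\<forall>\<^sub>F x in at_infinity. Z x < a)"
    then have "\<forall>n::nat. \<exists>x. real n \<le> norm x \<and> a \<le> Z x"
      by (auto simp: eventually_at_infinity not_less)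
    then obtain X where X: "\<And>n. real n \<le> norm (X n)" "\<And>n. a \<le> Z (X n)"
      by metis
    have "filterlim X at_infinity sequentially"
      using X(1) by (intro filterlim_norm_at_top_imp_at_infinity filterlim_at_top_mono[OF filterlim_real_sequentially])
        auto
    then have "(\<lambda>n. Z (X n)) \<longlonglongrightarrow> 0"
      by (rule Z_tendsto_0_sequentially)
    then have "a \<le> 0"
      using X(2) by (simp add: LIMSEQ_le_const)
    then show False
      using a by simp
  qed
qed

lemma neg_ln_Z_coercive: "filterlim (\<lambda>x. - ln (Z x)) at_top at_infinity"
proof -
  have "filterlim Z (at_right 0) at_infinity"
    using Z_tendsto_0 Z_pos by (intro tendsto_imp_filterlim_at_right) (auto intro: always_eventually)
  then have "filterlim (\<lambda>x. ln (Z x)) at_bot at_infinity"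
    by (rule filterlim_compose[OF ln_at_0])
  then show ?thesis
    by (simp add: filterlim_uminus_at_top)
qed

lemma log_Z_ge_shifted_ball:
  assumes r: "r \<ge> 0" and m: "m > 0" "\<And>y. y \<in> cball 0 (r + 1) \<Longrightarrow> m \<le> w y"
  shows "s * ln (gauss_density s (0::'a) 0 * m * measure lborel (ball (0::'a) 1)) - (\<bar>r - norm x\<bar> + 1)\<^sup>2 / 2
    \<le> s * ln (Z x)"
proof -
  define P where "P = gauss_density s (0::'a) 0 * m * measure lborel (ball (0::'a) 1)"
  have P: "P > 0"
    unfolding P_def using gauss_density_pos[OF s_pos, of "0::'a" 0] m(1) by (simp add: content_ball)
  obtain u where u: "norm u = 1" "x = norm x *\<^sub>R u"
    using exists_unit_scaleR_norm by blast
  define c where "c = r *\<^sub>R u"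
  have dist_c: "dist c x = \<bar>r - norm x\<bar>"
    unfolding c_def dist_norm using u by (metis norm_scaleR mult_1_right scaleR_diff_left)
  have ball_sub: "ball c 1 \<subseteq> cball 0 (r + 1)"
  proof
    fix y
    assume "y \<in> ball c 1"
    then have "norm (y - c) < 1"
      by (simp add: dist_norm norm_minus_commute)
    then show "y \<in> cball 0 (r + 1)"
      using norm_triangle_sub[of y c] r u(1) unfolding c_def by simp
  qed
  have "gauss_density s (0::'a) 0 * exp (- (dist c x + 1)\<^sup>2 / (2 * s)) * m * measure lborel (ball c 1) \<le> Z x"
    by (rule Z_ge_ball) (use m ball_sub in auto)
  then have "exp (- (\<bar>r - norm x\<bar> + 1)\<^sup>2 / (2 * s)) * P \<le> Z x"
    unfolding dist_c P_def by (simp add: content_ball ac_simps)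
  then have "ln P - (\<bar>r - norm x\<bar> + 1)\<^sup>2 / (2 * s) \<le> ln (Z x)"
    using P Z_pos[of x] by (subst (asm) ln_le_cancel_iff[symmetric]) (auto simp: ln_mult)
  then show ?thesis
    unfolding P_def[symmetric] using s_pos mult_left_mono[of _ _ s] by (fastforce simp: right_diff_distrib)
qed

lemma tilted_log_Z_lower_bound:
  "\<exists>C. \<forall>x. norm x + C \<le> (norm x)\<^sup>2 / 2 + s * ln (Z x) - inner x p"
proof -
  define r where "r = norm p + 2"
  obtain m where m: "m > 0" "\<And>y. y \<in> cball 0 (r + 1) \<Longrightarrow> m \<le> w y"
    using w_lower_bound by blast
  define K where "K = s * ln (gauss_density s (0::'a) 0 * m * measure lborel (ball (0::'a) 1))"
  have "norm x + (K - r\<^sup>2 / 2 - r - 1 / 2) \<le> (norm x)\<^sup>2 / 2 + s * ln (Z x) - inner x p" for x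
  proof -
    have "K - (\<bar>r - norm x\<bar> + 1)\<^sup>2 / 2 \<le> s * ln (Z x)"
      unfolding K_def using log_Z_ge_shifted_ball[of r m x] m unfolding r_def by simp
    moreover have "(\<bar>r - norm x\<bar> + 1)\<^sup>2 \<le> (r - norm x)\<^sup>2 + 2 * r + 2 * norm x + 1"
    proof -
      have "\<bar>r - norm x\<bar> \<le> r + norm x"
        unfolding r_def by (simp add: abs_le_iff)
      then show ?thesis
        by (simp add: power2_sum)
    qed
    moreover have "(r - norm x)\<^sup>2 = r\<^sup>2 - 2 * (r * norm x) + (norm x)\<^sup>2"
      by (simp add: power2_diff)
    moreover have "inner x p \<le> r * norm x - 2 * norm x"
      using norm_cauchy_schwarz[of x p] unfolding r_def by (simp add: algebra_simps)
    ultimately show ?thesis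
      by linarith
  qed
  then show ?thesis
    by blast
qed

lemma tilted_log_Z_coercive:
  "filterlim (\<lambda>x. (norm x)\<^sup>2 / 2 + s * ln (Z x) - inner x p) at_top at_infinity"
proof -
  obtain C where C: "\<And>x. norm x + C \<le> (norm x)\<^sup>2 / 2 + s * ln (Z x) - inner x p"
    using tilted_log_Z_lower_bound by blast
  have "filterlim (\<lambda>x::'a. C + norm x) at_top at_infinity"
    by (rule filterlim_tendsto_add_at_top[OF tendsto_const filterlim_norm_at_top])
  then show ?thesis
    by (rule filterlim_at_top_mono) (use C in \<open>auto intro: always_eventually simp: add.commute\<close>)
qed

end

section \<open>The zeroth-order proximal point algorithm\<close>

locale zeroth_order_prox =
  fixes f :: "'a::euclidean_space \<Rightarrow> real" and lam del :: real
  assumes lam_pos: "lam > 0" and del_pos: "del > 0"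
    and continuous_f: "continuous_on UNIV f"
    and integrable_exp: "integrable lborel (\<lambda>y. exp (- f y / del))"
begin

sublocale gaussian_smoothing "lam * del" "\<lambda>y. exp (- f y / del)"
  using lam_pos del_pos integrable_exp
  by unfold_locales (auto intro!: continuous_intros continuous_f)

lemma zprox_eq_mean: "zprox del lam f = mean"
  unfolding zprox_def mean_def Z_def by simp

lemma soft_moreau_eq: "soft_moreau lam del f = (\<lambda>x. - del * ln (Z x))"
  unfolding soft_moreau_def Z_def by simp

lemma soft_moreau_coercive: "filterlim (soft_moreau lam del f) at_top at_infinity"
  unfolding soft_moreau_eq
  using filterlim_tendsto_pos_mult_at_top[OF tendsto_const del_pos neg_ln_Z_coercive]
  by simp

lemma smooth_convex_soft_moreau:
  assumes "convex_on UNIV (soft_moreau lam del f)"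
  shows "smooth_convex (soft_moreau lam del f) (\<lambda>x. (1 / lam) *\<^sub>R (x - zprox del lam f x)) lam"
proof
  fix x z :: 'a
  have "lam * (- del * ln (Z z))
      \<le> lam * (- del * ln (Z x) + inner ((1 / lam) *\<^sub>R (x - mean x)) (z - x) + (norm (z - x))\<^sup>2 / (2 * lam))"
    using neg_log_Z_upper_quadratic[of z x] lam_pos by (simp add: algebra_simps)
  then show "soft_moreau lam del f z \<le> soft_moreau lam del f x
      + inner ((1 / lam) *\<^sub>R (x - zprox del lam f x)) (z - x) + (norm (z - x))\<^sup>2 / (2 * lam)"
    unfolding soft_moreau_eq zprox_eq_mean using lam_pos by (rule mult_left_le_imp_le)
qed (use lam_pos assms in auto)

lemma surj_zprox:
  assumes "convex_on UNIV (soft_moreau lam del f)"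
  shows "surj (zprox del lam f)"
proof -
  interpret S: smooth_convex "soft_moreau lam del f" "\<lambda>x. (1 / lam) *\<^sub>R (x - zprox del lam f x)" lam
    using assms by (rule smooth_convex_soft_moreau)
  have "S.psi x - inner x p = (norm x)\<^sup>2 / 2 + lam * del * ln (Z x) - inner x p" for x p
    unfolding S.psi_def by (simp add: soft_moreau_eq)
  then have "surj S.step"
    using S.surj_step_if_coercive tilted_log_Z_coercive by presburger
  moreover have "S.step = zprox del lam f"
    unfolding S.step_def[abs_def] using lam_pos by simp
  ultimately show ?thesis
    by simp
qed

end

theorem theorem5:
  fixes f :: "'a::euclidean_space \<Rightarrow> real" and lam del :: real and x0 :: 'a
  assumes lam: "lam > 0" and del: "del > 0"
    and A1_cont: "continuous_on UNIV f"
    and A1_min: "\<exists>xm. \<forall>y. f xm \<le> f y"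
    and A2: "integrable lborel (\<lambda>y. exp (- f y / del))"
    and cvx: "convex_on UNIV (soft_moreau lam del f)"
  shows "(\<exists>H :: 'a \<Rightarrow> real. convex_on UNIV H \<and> zprox del lam f = prox (lam * del) H)
    \<and> firmly_nonexpansive (zprox del lam f)
    \<and> (\<exists>xs \<in> argmin_set (soft_moreau lam del f). zoppa del lam f x0 \<longlonglongrightarrow> xs)
    \<and> (\<forall>k::nat. k \<ge> 1 \<longrightarrow>
         soft_moreau lam del f (zoppa del lam f x0 k) - (INF y. soft_moreau lam del f y)
           \<le> (infdist x0 (argmin_set (soft_moreau lam del f)))\<^sup>2 / (2 * lam * real k))
    \<and> (\<forall>k::nat. k \<ge> 1 \<longrightarrow>
         (\<exists>g. (soft_moreau lam del f has_derivative (\<lambda>h. inner g h)) (at (zoppa del lam f x0 k))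
              \<and> norm g \<le> 2 * infdist x0 (argmin_set (soft_moreau lam del f)) / (lam * (real k + 1))))"
proof -
  interpret zeroth_order_prox f lam del
    using lam del A1_cont A2 by unfold_locales
  interpret S: smooth_convex "soft_moreau lam del f" "\<lambda>x. (1 / lam) *\<^sub>R (x - zprox del lam f x)" lam
    using cvx by (rule smooth_convex_soft_moreau)
  have step: "S.step = zprox del lam f"
    unfolding S.step_def[abs_def] using lam by simp
  have iterates: "zoppa del lam f x0 = (\<lambda>k. (S.step ^^ k) x0)"
    unfolding zoppa_def[abs_def] step ..
  have argmin: "argmin_set (soft_moreau lam del f) \<noteq> {}"
    using continuous_coercive_attains_min[OF S.continuous_F soft_moreau_coercive]
    unfolding argmin_set_def by blast
  have "\<exists>H. convex_on UNIV H \<and> zprox del lam f = prox (lam * del) H"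
    using S.step_eq_prox[of "lam * del"] surj_zprox[OF cvx] lam del unfolding step by simp
  moreover have "firmly_nonexpansive (zprox del lam f)"
    using S.firmly_nonexpansive_step unfolding step .
  moreover have "\<exists>xs \<in> argmin_set (soft_moreau lam del f). zoppa del lam f x0 \<longlonglongrightarrow> xs"
    using S.gradient_descent_converges[OF argmin] unfolding iterates .
  moreover have "soft_moreau lam del f (zoppa del lam f x0 k) - (INF y. soft_moreau lam del f y)
      \<le> (infdist x0 (argmin_set (soft_moreau lam del f)))\<^sup>2 / (2 * lam * real k)" if "k \<ge> 1" for k
    using S.gradient_descent_value_rate[OF argmin that] unfolding iterates by simp
  moreover have "\<exists>g. (soft_moreau lam del f has_derivative (\<lambda>h. inner g h)) (at (zoppa del lam f x0 k))
      \<and> norm g \<le> 2 * infdist x0 (argmin_set (soft_moreau lam del f)) / (lam * (real k + 1))" for k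
    unfolding iterates using S.has_derivative_grad S.gradient_descent_grad_rate[OF argmin] by blast
  ultimately show ?thesis
    by blast
qed

end
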